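(* Let $M \geq 1$ and let $f \colon (\mathbb{W},d_{\mathrm{par}}) \to (\mathbb{H},d)$ be an $M$-bilipschitz map. Then for every $\epsilon \in (0,1]$ there exist $C = C(\epsilon,M) \geq 10$ and $\delta = \delta(C,\epsilon,M) > 0$ such that for all $w \in \mathbb{W}$ and $r > 0$: $$\rho_{f}(B(w,Cr)) < \delta \implies \beta_{f}(B(w,r)) < \epsilon.$$
   Context: $\mathbb{H}$ is $\mathbb{R}^{3}$ with group law $(x_{1},y_{1},t_{1}) \cdot (x_{2},y_{2},t_{2}) = (x_{1}+x_{2},y_{1}+y_{2},t_{1}+t_{2}+\tfrac{1}{2}(x_{1}y_{2}-x_{2}y_{1}))$, metric $d(p,q) = \|q^{-1}\cdot p\|$ with $\|(x,y,t)\| = \max\{\sqrt{x^{2}+y^{2}},\sqrt{|t|}\}$, and $N(E,\delta) = \{p : \operatorname{dist}(p,E) \leq \delta\}$. A horizontal line in $\mathbb{H}$ is a set $p \cdot \{(sa,sb,0) : s \in \mathbb{R}\}$ with $p \in \mathbb{H}$, $(a,b) \neq 0$. A vertical plane is a set $\{(x,y,t) : (x,y) \in \lambda, t \in \mathbb{R}\}$ for an affine line $\lambda \subset \mathbb{R}^{2}$. $\mathbb{W}$ is $\mathbb{R}^{2}$ with $d_{\mathrm{par}}((y,t),(\xi,\tau)) = \max\{|y-\xi|,|t-\tau|^{1/2}\}$; horizontal lines in $\mathbb{W}$ are the sets $\mathbb{R} \times \{t\}$; $B(w,r)$ is the closed $d_{\mathrm{par}}$-ball. The ruler coefficient $\rho_{f}(B(w,r))$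 is the infimum of $\rho > 0$ such that for every horizontal line $\ell \subset \mathbb{W}$ there is a horizontal line $L \subset \mathbb{H}$ with $f(\ell \cap B(w,r)) \subset N(L,\rho r)$. For a vertical plane $\mathbb{V}$, $\beta_{f}(\mathbb{V};B(w,r))$ is the infimum of $\epsilon > 0$ such that for every horizontal line $\ell \subset \mathbb{W}$ there is a horizontal line $L \subset \mathbb{V}$ with $f(\ell \cap B(w,r)) \subset N(L,\epsilon r)$; $\beta_{f}(B(w,r)) := \inf_{\mathbb{V}} \beta_{f}(\mathbb{V};B(w,r))$ over all vertical planes. *)

theory Defs
  imports Complex_Main
begin

type_synonym heis = "real \<times> real \<times> real"
type_synonym wpl = "real \<times> real"

definition hmult :: "heis \<Rightarrow> heis \<Rightarrow> heis" where
  "hmult p q = (case p of (x1, y1, t1) \<Rightarrow> case q of (x2, y2, t2) \<Rightarrow>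
     (x1 + x2, y1 + y2, t1 + t2 + (1/2) * (x1 * y2 - x2 * y1)))"

definition hinv :: "heis \<Rightarrow> heis" where
  "hinv p = (case p of (x, y, t) \<Rightarrow> (-x, -y, -t))"

definition hnorm :: "heis \<Rightarrow> real" where
  "hnorm p = (case p of (x, y, t) \<Rightarrow> max (sqrt (x^2 + y^2)) (sqrt \<bar>t\<bar>))"

definition hdist :: "heis \<Rightarrow> heis \<Rightarrow> real" where
  "hdist p q = hnorm (hmult (hinv q) p)"

definition hsetdist :: "heis \<Rightarrow> heis set \<Rightarrow> real" where
  "hsetdist p E = Inf (hdist p ` E)"

definition hnbhd :: "heis set \<Rightarrow> real \<Rightarrow> heis set" where
  "hnbhd E \<delta> = {p. hsetdist p E \<le> \<delta>}"

definition horiz_line_H :: "heis set \<Rightarrow> bool" where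
  "horiz_line_H L \<longleftrightarrow> (\<exists>p a b. (a, b) \<noteq> (0, 0) \<and>
      L = {hmult p (s * a, s * b, 0) | s. s \<in> (UNIV :: real set)})"

definition vertical_plane :: "heis set \<Rightarrow> bool" where
  "vertical_plane V \<longleftrightarrow> (\<exists>x0 y0 u v. (u, v) \<noteq> (0, 0) \<and>
      V = {(x, y, t). (x, y) \<in> {(x0 + s * u, y0 + s * v) | s. s \<in> (UNIV :: real set)}})"

definition dpar :: "wpl \<Rightarrow> wpl \<Rightarrow> real" where
  "dpar w z = (case w of (y, t) \<Rightarrow> case z of (\<xi>, \<tau>) \<Rightarrow> max \<bar>y - \<xi>\<bar> (sqrt \<bar>t - \<tau>\<bar>))"

definition horiz_line_W :: "wpl set \<Rightarrow> bool" where
  "horiz_line_W l \<longleftrightarrow> (\<exists>t. l = UNIV \<times> {t})"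

definition wball :: "wpl \<Rightarrow> real \<Rightarrow> wpl set" where
  "wball w r = {z. dpar w z \<le> r}"

definition bilipschitz :: "real \<Rightarrow> (wpl \<Rightarrow> heis) \<Rightarrow> bool" where
  "bilipschitz M f \<longleftrightarrow> (\<forall>a b. dpar a b / M \<le> hdist (f a) (f b) \<and> hdist (f a) (f b) \<le> M * dpar a b)"

definition ruler_coeff :: "(wpl \<Rightarrow> heis) \<Rightarrow> wpl \<Rightarrow> real \<Rightarrow> real" where
  "ruler_coeff f w r = Inf {\<rho>. \<rho> > 0 \<and> (\<forall>l. horiz_line_W l \<longrightarrow>
      (\<exists>L. horiz_line_H L \<and> f ` (l \<inter> wball w r) \<subseteq> hnbhd L (\<rho> * r)))}"

definition beta_plane :: "(wpl \<Rightarrow> heis) \<Rightarrow> heis set \<Rightarrow> wpl \<Rightarrow> real \<Rightarrow> real" where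
  "beta_plane f V w r = Inf {\<epsilon>. \<epsilon> > 0 \<and> (\<forall>l. horiz_line_W l \<longrightarrow>
      (\<exists>L. horiz_line_H L \<and> L \<subseteq> V \<and> f ` (l \<inter> wball w r) \<subseteq> hnbhd L (\<epsilon> * r)))}"

definition beta :: "(wpl \<Rightarrow> heis) \<Rightarrow> wpl \<Rightarrow> real \<Rightarrow> real" where
  "beta f w r = Inf {beta_plane f V w r | V. vertical_plane V}"

end

theory Submission
  imports Defs
begin

text \<open>
  Put \<open>N = 10^5 M^6 / \<epsilon>^2\<close>, \<open>C = N\<close> and \<open>\<delta> = 1 / N^2\<close>. A small ruler coefficient on
  \<open>B(w, N r)\<close> puts the image of every horizontal line of that ball within \<open>r / N\<close> of a
  horizontal line of \<open>\<bbbH>\<close>. A left translation and a rotation move the line approximating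
  the image of the horizontal line through \<open>w\<close> onto the \<open>x\<close>-axis, with \<open>f w\<close> near the
  origin. Each other approximating line \<open>B\<close> (at heights within \<open>r^2\<close> of that of \<open>w\<close>) then
  passes within \<open>3 M r\<close> of the \<open>x\<close>-axis at three points whose \<open>x\<close>-coordinates are
  \<open>N r / (2 M)\<close> apart, by the lower Lipschitz bound. Along \<open>B\<close> the coordinate \<open>y\<close> is affine
  in \<open>x\<close> and \<open>t - x y / 2\<close> is quadratic in \<open>x\<close>; a quadratic that is small at three
  far-apart points has tiny coefficients, so over \<open>B(w, r)\<close> the line \<open>B\<close> is
  \<open>\<epsilon> r / 2\<close>-close to a line \<open>{(s, 0, c)}\<close>. All these lines lie in one vertical plane.
\<close>

section \<open>The Heisenberg group in coordinates\<close>

lemma hmult_eq: "hmult (x1, y1, t1) (x2, y2, t2) = (x1 + x2, y1 + y2, t1 + t2 + (x1 * y2 - x2 * y1) / 2)"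
  by (simp add: hmult_def)

lemma hinv_eq: "hinv (x, y, t) = (-x, -y, -t)"
  by (simp add: hinv_def)

lemma hnorm_eq: "hnorm (x, y, t) = max (sqrt (x^2 + y^2)) (sqrt \<bar>t\<bar>)"
  by (simp add: hnorm_def)

lemma hdist_eq:
  "hdist (x1, y1, t1) (x2, y2, t2) = hnorm (x1 - x2, y1 - y2, t1 - t2 + (x1 * y2 - x2 * y1) / 2)"
  by (simp add: hdist_def hmult_eq hinv_eq field_simps)

lemma dpar_eq: "dpar (y, t) (\<xi>, \<tau>) = max \<bar>y - \<xi>\<bar> (sqrt \<bar>t - \<tau>\<bar>)"
  by (simp add: dpar_def)

lemma hmult_assoc: "hmult (hmult p q) r = hmult p (hmult q r)"
  by (cases p, cases q, cases r) (simp add: hmult_eq field_simps)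

lemma hmult_zero_right [simp]: "hmult p (0, 0, 0) = p"
  by (cases p) (simp add: hmult_eq)

lemma hmult_hinv_left [simp]: "hmult (hinv p) (hmult p q) = q"
  by (cases p, cases q) (simp add: hmult_eq hinv_eq field_simps)

lemma sqrt_le_iff: assumes "0 \<le> x" shows "sqrt x \<le> c \<longleftrightarrow> x \<le> c^2 \<and> 0 \<le> c"
  using order_trans[OF real_sqrt_ge_zero[OF assms], of c] by (auto simp: real_le_lsqrt dest: sqrt_le_D)

lemma hnorm_le_iff: "hnorm (x, y, t) \<le> c \<longleftrightarrow> x^2 + y^2 \<le> c^2 \<and> \<bar>t\<bar> \<le> c^2 \<and> 0 \<le> c"
  by (auto simp: hnorm_eq sqrt_le_iff)

lemma mem_wball_iff:
  "0 \<le> R \<Longrightarrow> (y, t) \<in> wball (y0, \<tau>0) R \<longleftrightarrow> \<bar>y - y0\<bar> \<le> R \<and> \<bar>t - \<tau>0\<bar> \<le> R^2"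
  by (auto simp: wball_def dpar_eq sqrt_le_iff abs_minus_commute)

lemma hnorm_nonneg: "0 \<le> hnorm p"
  by (cases p) (simp add: hnorm_eq le_max_iff_disj)

lemma abs_fst_le_hnorm: "\<bar>x\<bar> \<le> hnorm (x, y, t)"
  using real_sqrt_ge_abs1[of x y] by (simp add: hnorm_eq le_max_iff_disj)

lemma abs_cross_le_sqrt_mult:
  "\<bar>x1 * y2 - x2 * y1\<bar> \<le> sqrt (x1^2 + y1^2) * sqrt (x2^2 + y2^2)"
proof -
  have "(x1^2 + y1^2) * (x2^2 + y2^2) = (x1 * y2 - x2 * y1)^2 + (x1 * x2 + y1 * y2)^2"
    by (simp add: power2_eq_square algebra_simps)
  then have "\<bar>x1 * y2 - x2 * y1\<bar> \<le> sqrt ((x1^2 + y1^2) * (x2^2 + y2^2))"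
    by (intro real_le_rsqrt) simp
  then show ?thesis by (simp add: real_sqrt_mult)
qed

lemma hnorm_hmult_le: "hnorm (hmult p q) \<le> hnorm p + hnorm q"
proof -
  obtain x1 y1 t1 x2 y2 t2 where pq: "p = (x1, y1, t1)" "q = (x2, y2, t2)"
    by (cases p, cases q) auto
  define a b where "a = hnorm p" and "b = hnorm q"
  have a: "sqrt (x1^2 + y1^2) \<le> a" "\<bar>t1\<bar> \<le> a^2" "0 \<le> a"
    using hnorm_le_iff[of x1 y1 t1 a] by (auto simp: a_def pq hnorm_eq sqrt_le_iff)
  have b: "sqrt (x2^2 + y2^2) \<le> b" "\<bar>t2\<bar> \<le> b^2" "0 \<le> b"
    using hnorm_le_iff[of x2 y2 t2 b] by (auto simp: b_def pq hnorm_eq sqrt_le_iff)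
  have "sqrt ((x1 + x2)^2 + (y1 + y2)^2) \<le> a + b"
    using real_sqrt_sum_squares_triangle_ineq[of x1 x2 y1 y2] a b by linarith
  moreover have "\<bar>x1 * y2 - x2 * y1\<bar> \<le> a * b"
    using abs_cross_le_sqrt_mult[of x1 y2 x2 y1] mult_mono[OF a(1) b(1)] a(3) by simp
  then have "\<bar>t1 + t2 + (x1 * y2 - x2 * y1) / 2\<bar> \<le> a^2 + b^2 + a * b"
    using a(2) b(2) mult_nonneg_nonneg[OF a(3) b(3)]
      abs_triangle_ineq[of "t1 + t2" "(x1 * y2 - x2 * y1) / 2"] abs_triangle_ineq[of t1 t2] by simp
  then have "\<bar>t1 + t2 + (x1 * y2 - x2 * y1) / 2\<bar> \<le> (a + b)^2"
    using mult_nonneg_nonneg[OF a(3) b(3)] by (simp add: power2_sum)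
  ultimately have "hnorm (hmult p q) \<le> a + b"
    using a(3) b(3) by (simp add: pq hmult_eq hnorm_eq real_le_lsqrt)
  then show ?thesis by (simp add: a_def b_def)
qed

lemma hdist_nonneg: "0 \<le> hdist p q"
  by (simp add: hdist_def hnorm_nonneg)

lemma hnorm_hinv: "hnorm (hinv p) = hnorm p"
  by (cases p) (simp add: hinv_eq hnorm_eq)

lemma hdist_commute: "hdist p q = hdist q p"
proof -
  have "hmult (hinv p) q = hinv (hmult (hinv q) p)"
    by (cases p, cases q) (simp add: hmult_eq hinv_eq field_simps)
  then show ?thesis by (simp add: hdist_def hnorm_hinv)
qed

lemma hdist_triangle: "hdist p q \<le> hdist p r + hdist r q"
proof -
  have "hmult (hinv q) p = hmult (hmult (hinv q) r) (hmult (hinv r) p)"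
    by (cases p, cases q, cases r) (simp add: hmult_eq hinv_eq field_simps)
  then show ?thesis
    unfolding hdist_def using hnorm_hmult_le by (metis add.commute)
qed

lemma hdist_hmult_left: "hdist (hmult g p) (hmult g q) = hdist p q"
proof -
  have "hmult (hinv (hmult g q)) (hmult g p) = hmult (hinv q) p"
    by (cases g, cases p, cases q) (simp add: hmult_eq hinv_eq field_simps)
  then show ?thesis by (simp add: hdist_def)
qed

lemma hnorm_eq_hdist_zero: "hnorm p = hdist p (0, 0, 0)"
  by (cases p) (simp add: hdist_eq)

section \<open>Rotations and frames\<close>

definition hrot :: "real \<Rightarrow> real \<Rightarrow> heis \<Rightarrow> heis" where
  "hrot u1 u2 p = (case p of (x, y, t) \<Rightarrow> (u1 * x - u2 * y, u2 * x + u1 * y, t))"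

lemma hrot_eq: "hrot u1 u2 (x, y, t) = (u1 * x - u2 * y, u2 * x + u1 * y, t)"
  by (simp add: hrot_def)

lemma hrot_inverse:
  assumes "u1^2 + u2^2 = 1"
  shows "hrot u1 (-u2) (hrot u1 u2 p) = p"
proof (cases p)
  case (fields x y t)
  have "u1 * (u1 * x - u2 * y) + u2 * (u2 * x + u1 * y) = (u1^2 + u2^2) * x"
    "u1 * (u2 * x + u1 * y) - u2 * (u1 * x - u2 * y) = (u1^2 + u2^2) * y"
    by (simp_all add: power2_eq_square algebra_simps)
  then show ?thesis using assms by (simp add: fields hrot_eq)
qed

lemma hrot_hinv: "hrot u1 u2 (hinv p) = hinv (hrot u1 u2 p)"
  by (cases p) (simp add: hrot_eq hinv_eq)

lemma hrot_hmult:
  assumes "u1^2 + u2^2 = 1"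
  shows "hrot u1 u2 (hmult p q) = hmult (hrot u1 u2 p) (hrot u1 u2 q)"
proof -
  obtain x1 y1 t1 x2 y2 t2 where pq: "p = (x1, y1, t1)" "q = (x2, y2, t2)"
    by (cases p, cases q) auto
  have "(u1 * x1 - u2 * y1) * (u2 * x2 + u1 * y2) - (u1 * x2 - u2 * y2) * (u2 * x1 + u1 * y1)
      = (u1^2 + u2^2) * (x1 * y2 - x2 * y1)"
    by (simp add: power2_eq_square algebra_simps)
  then show ?thesis
    using assms by (simp add: pq hrot_eq hmult_eq) (simp add: algebra_simps)
qed

lemma hnorm_hrot: "u1^2 + u2^2 = 1 \<Longrightarrow> hnorm (hrot u1 u2 p) = hnorm p"
proof (cases p)
  case (fields x y t)
  assume u: "u1^2 + u2^2 = 1"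
  have "(u1 * x - u2 * y)^2 + (u2 * x + u1 * y)^2 = (u1^2 + u2^2) * (x^2 + y^2)"
    by (simp add: power2_eq_square algebra_simps)
  then show ?thesis using u by (simp add: fields hrot_eq hnorm_eq)
qed

lemma hdist_hrot: "u1^2 + u2^2 = 1 \<Longrightarrow> hdist (hrot u1 u2 p) (hrot u1 u2 q) = hdist p q"
  by (simp add: hdist_def hnorm_hrot flip: hrot_hinv hrot_hmult)

definition hframe :: "heis \<Rightarrow> real \<Rightarrow> real \<Rightarrow> heis \<Rightarrow> heis" where
  "hframe P u1 u2 x = hmult P (hrot u1 u2 x)"

definition hframe_inv :: "heis \<Rightarrow> real \<Rightarrow> real \<Rightarrow> heis \<Rightarrow> heis" where
  "hframe_inv P u1 u2 q = hrot u1 (-u2) (hmult (hinv P) q)"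

lemma hframe_inv_hframe [simp]: "u1^2 + u2^2 = 1 \<Longrightarrow> hframe_inv P u1 u2 (hframe P u1 u2 x) = x"
  by (simp add: hframe_def hframe_inv_def hrot_inverse)

lemma hframe_zero [simp]: "hframe P u1 u2 (0, 0, 0) = P"
  by (simp add: hframe_def hrot_eq)

lemma hdist_hframe_inv:
  "u1^2 + u2^2 = 1 \<Longrightarrow> hdist (hframe_inv P u1 u2 p) (hframe_inv P u1 u2 q) = hdist p q"
  by (simp add: hframe_inv_def hdist_hrot hdist_hmult_left)

lemma hdist_hframe_inv_left:
  "u1^2 + u2^2 = 1 \<Longrightarrow> hdist (hframe_inv P u1 u2 p) x = hdist p (hframe P u1 u2 x)"
  by (metis hdist_hframe_inv hframe_inv_hframe)

section \<open>Horizontal lines\<close>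

lemma horiz_line_H_range:
  "horiz_line_H L \<longleftrightarrow> (\<exists>p a b. (a, b) \<noteq> (0, 0) \<and> L = range (\<lambda>s. hmult p (s * a, s * b, 0)))"
  unfolding horiz_line_H_def by (simp add: full_SetCompr_eq)

lemma horiz_line_H_hmult:
  assumes "horiz_line_H L"
  shows "horiz_line_H (hmult g ` L)"
proof -
  obtain p a b where ab: "(a, b) \<noteq> (0, 0)" and "L = range (\<lambda>s. hmult p (s * a, s * b, 0))"
    using assms unfolding horiz_line_H_range by blast
  then have "hmult g ` L = range (\<lambda>s. hmult (hmult g p) (s * a, s * b, 0))"
    by (simp add: image_image hmult_assoc)
  then show ?thesis
    using ab unfolding horiz_line_H_range by blast
qed

lemma horiz_line_H_hrot:
  assumes u: "u1^2 + u2^2 = 1" and "horiz_line_H L"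
  shows "horiz_line_H (hrot u1 u2 ` L)"
proof -
  obtain p a b where ab: "(a, b) \<noteq> (0, 0)" and L: "L = range (\<lambda>s. hmult p (s * a, s * b, 0))"
    using assms(2) unfolding horiz_line_H_range by blast
  define a' b' where "a' = u1 * a - u2 * b" and "b' = u2 * a + u1 * b"
  have "a'^2 + b'^2 = (u1^2 + u2^2) * (a^2 + b^2)"
    by (simp add: a'_def b'_def power2_eq_square algebra_simps)
  then have "(a', b') \<noteq> (0, 0)"
    using ab u by auto
  moreover have "hrot u1 u2 (hmult p (s * a, s * b, 0)) = hmult (hrot u1 u2 p) (s * a', s * b', 0)" for s
    by (simp add: hrot_hmult[OF u] hrot_eq a'_def b'_def algebra_simps)
  ultimately show ?thesis
    unfolding horiz_line_H_range L image_image by (intro exI[of _ "hrot u1 u2 p"] exI[of _ a'] exI[of _ b']) simp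
qed

lemma horiz_line_H_hframe_inv:
  "u1^2 + u2^2 = 1 \<Longrightarrow> horiz_line_H L \<Longrightarrow> horiz_line_H (hframe_inv P u1 u2 ` L)"
  unfolding hframe_inv_def image_comp[symmetric, of "hrot u1 (-u2)" "hmult (hinv P)", unfolded comp_def]
  by (simp add: horiz_line_H_hrot horiz_line_H_hmult)

lemma horiz_line_H_normal_form:
  assumes "horiz_line_H A" "P \<in> A"
  obtains u1 u2 where "u1^2 + u2^2 = 1" "A = range (\<lambda>s. hframe P u1 u2 (s, 0, 0))"
proof -
  obtain P0 a b where ab: "(a, b) \<noteq> (0, 0)" and A: "A = range (\<lambda>s. hmult P0 (s * a, s * b, 0))"
    using assms(1) unfolding horiz_line_H_range by blast
  obtain s0 where P: "P = hmult P0 (s0 * a, s0 * b, 0)"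
    using assms(2) A by blast
  define n where "n = sqrt (a^2 + b^2)"
  have n: "n > 0" "n^2 = a^2 + b^2"
    using ab by (auto simp: n_def sum_power2_gt_zero_iff)
  have "(a / n)^2 + (b / n)^2 = n^2 / n^2"
    by (simp only: power_divide add_divide_distrib[symmetric] n(2)[symmetric])
  then have unit: "(a / n)^2 + (b / n)^2 = 1"
    using n(1) by simp
  have "hframe P (a / n) (b / n) (s, 0, 0) = hmult P0 ((s0 + s / n) * a, (s0 + s / n) * b, 0)" for s
  proof -
    have "hframe P (a / n) (b / n) (s, 0, 0) = hmult P ((s / n) * a, (s / n) * b, 0)"
      by (simp add: hframe_def hrot_eq mult.commute)
    also have "\<dots> = hmult P0 ((s0 + s / n) * a, (s0 + s / n) * b, 0)"
      unfolding P hmult_assoc by (simp add: hmult_eq algebra_simps)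
    finally show ?thesis .
  qed
  then have frame: "range (\<lambda>s. hframe P (a / n) (b / n) (s, 0, 0))
      = (\<lambda>s'. hmult P0 (s' * a, s' * b, 0)) ` range (\<lambda>s. s0 + s / n)"
    by (simp add: image_image)
  have "range (\<lambda>s. s0 + s / n) = UNIV"
    using n by (auto intro!: image_eqI[where x = "(_ - s0) * n"])
  then show ?thesis
    using that[OF unit] frame A by simp
qed

lemma hframe_axis_parallel_line:
  assumes "u1^2 + u2^2 = 1"
  shows "horiz_line_H (range (\<lambda>s. hframe P u1 u2 (s, 0, c)))"
proof -
  have "hframe P u1 u2 (s, 0, c) = hmult (hmult P (0, 0, c)) (s * u1, s * u2, 0)" for s
    by (cases P) (simp add: hframe_def hrot_eq hmult_eq algebra_simps)
  moreover have "(u1, u2) \<noteq> (0, 0)"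
    using assms by auto
  ultimately show ?thesis
    unfolding horiz_line_H_range by (intro exI[of _ "hmult P (0, 0, c)"] exI[of _ u1] exI[of _ u2]) simp
qed

lemma hframe_axis_parallel_lines_in_vertical_plane:
  assumes "u1^2 + u2^2 = 1"
  obtains V where "vertical_plane V" "\<And>c. range (\<lambda>s. hframe P u1 u2 (s, 0, c)) \<subseteq> V"
proof -
  obtain p1 p2 p3 where P: "P = (p1, p2, p3)"
    by (cases P) auto
  define V :: "heis set" where "V = {(x, y, t). (x, y) \<in> {(p1 + s * u1, p2 + s * u2) | s. s \<in> (UNIV :: real set)}}"
  have "(u1, u2) \<noteq> (0, 0)"
    using assms by auto
  then have "vertical_plane V"
    unfolding vertical_plane_def V_def by blast
  moreover have "range (\<lambda>s. hframe P u1 u2 (s, 0, c)) \<subseteq> V" for c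
    by (auto simp: V_def P hframe_def hrot_eq hmult_eq)
  ultimately show ?thesis
    using that by blast
qed

lemma hdist_horiz_line_le:
  assumes "horiz_line_H B" "(x, y, t) \<in> B" "(x', y', t') \<in> B"
  shows "hdist (x, y, t) (x', y', t') \<le> \<bar>x - x'\<bar> + \<bar>y - y'\<bar>"
proof -
  obtain p a b where B: "B = range (\<lambda>s. hmult p (s * a, s * b, 0))"
    using assms(1) unfolding horiz_line_H_range by blast
  then obtain s s' where q: "(x, y, t) = hmult p (s * a, s * b, 0)"
    and q': "(x', y', t') = hmult p (s' * a, s' * b, 0)"
    using assms(2,3) by blast
  have "x - x' = (s - s') * a" "y - y' = (s - s') * b"
    using q q' by (cases p; simp add: hmult_eq algebra_simps)+
  moreover have "hdist (x, y, t) (x', y', t') = hdist (s * a, s * b, 0) (s' * a, s' * b, 0)"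
    unfolding q q' hdist_hmult_left ..
  moreover have "\<dots> = sqrt (((s - s') * a)^2 + ((s - s') * b)^2)"
    by (simp add: hdist_eq hnorm_eq algebra_simps)
  ultimately show ?thesis
    using sqrt_sum_squares_le_sum_abs by simp
qed

lemma horiz_line_H_graph:
  assumes "horiz_line_H B" "(x, y, t) \<in> B" "(x', y', t') \<in> B" "x \<noteq> x'"
  obtains m k \<alpha> where "\<And>X Y T. (X, Y, T) \<in> B \<Longrightarrow> Y = m * X + k \<and> T = \<alpha> - k * X / 2"
proof -
  obtain p a b where B: "B = range (\<lambda>s. hmult p (s * a, s * b, 0))"
    using assms(1) unfolding horiz_line_H_range by blast
  obtain p1 p2 p3 where p: "p = (p1, p2, p3)"
    by (cases p) auto
  have "a \<noteq> 0"
    using assms(2-4) by (auto simp: B p hmult_eq)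
  define m k where "m = b / a" and "k = p2 - p1 * b / a"
  have "Y = m * X + k \<and> T = (p3 + p1 * k / 2) - k * X / 2" if "(X, Y, T) \<in> B" for X Y T
    using that \<open>a \<noteq> 0\<close> by (auto simp: B p m_def k_def hmult_eq field_simps)
  then show ?thesis
    using that by blast
qed

lemma near_x_axis_bounds:
  assumes "hdist (x, y, t) (s, 0, 0) \<le> D"
  shows "\<bar>y\<bar> \<le> D" "\<bar>t - x * y / 2\<bar> \<le> 2 * D^2"
proof -
  have D: "(x - s)^2 + y^2 \<le> D^2" "\<bar>t - s * y / 2\<bar> \<le> D^2" "0 \<le> D"
    using assms by (simp_all add: hdist_eq hnorm_le_iff)
  then have "y^2 \<le> D^2" "(x - s)^2 \<le> D^2"
    using zero_le_power2[of y] zero_le_power2[of "x - s"] by linarith+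
  then have y: "\<bar>y\<bar> \<le> D" and "\<bar>x - s\<bar> \<le> D"
    using D(3) by (simp_all add: abs_le_square_iff power2_le_iff_abs_le)
  then have "\<bar>(x - s) * y\<bar> \<le> D * D"
    unfolding abs_mult by (simp add: mult_mono)
  moreover have "t - x * y / 2 = (t - s * y / 2) - (x - s) * y / 2"
    by (simp add: field_simps)
  ultimately show "\<bar>t - x * y / 2\<bar> \<le> 2 * D^2"
    using D(2) by (simp add: power2_eq_square)
  show "\<bar>y\<bar> \<le> D" by (fact y)
qed

section \<open>Ruler coefficient and \<open>\<beta>\<close>-numbers\<close>

lemma mem_hnbhdI:
  assumes "q \<in> L" "hdist p q \<le> e"
  shows "p \<in> hnbhd L e"
proof -
  have "bdd_below (hdist p ` L)"
    by (rule bdd_belowI[of _ 0]) (auto simp: hdist_nonneg)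
  then have "Inf (hdist p ` L) \<le> hdist p q"
    using assms(1) by (simp add: cInf_lower)
  then show ?thesis
    using assms(2) unfolding hnbhd_def hsetdist_def by simp
qed

lemma hnbhdE:
  assumes "p \<in> hnbhd L e" "L \<noteq> {}" "e < e'"
  obtains q where "q \<in> L" "hdist p q < e'"
proof -
  have "Inf (hdist p ` L) < e'"
    using assms unfolding hnbhd_def hsetdist_def by simp
  then show ?thesis
    using cInf_lessD[of "hdist p ` L" e'] assms(2) that by blast
qed

lemma lipschitz_image_near_horiz_line:
  assumes lip: "\<And>a b. hdist (f a) (f b) \<le> M * dpar a b" and "0 \<le> M"
  obtains L where "horiz_line_H L" "f ` wball w R \<subseteq> hnbhd L (M * R)"
proof -
  define L where "L = range (\<lambda>s. hmult (f w) (s * 1, s * 0, 0))"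
  have "horiz_line_H L"
    unfolding L_def horiz_line_H_range by (intro exI[of _ "f w"] exI[of _ 1] exI[of _ 0]) simp
  have "f w = hmult (f w) (0 * 1, 0 * 0, 0)"
    by simp
  then have "f w \<in> L"
    unfolding L_def by (rule range_eqI)
  have "f ` wball w R \<subseteq> hnbhd L (M * R)"
  proof
    fix p assume "p \<in> f ` wball w R"
    then obtain z where z: "dpar w z \<le> R" "p = f z"
      unfolding wball_def by blast
    have "hdist (f z) (f w) \<le> M * R"
      using lip[of w z] hdist_commute[of "f z" "f w"] mult_left_mono[OF z(1) \<open>0 \<le> M\<close>] by linarith
    then show "p \<in> hnbhd L (M * R)"
      using \<open>f w \<in> L\<close> z(2) by (blast intro: mem_hnbhdI)
  qed
  then show ?thesis
    using that \<open>horiz_line_H L\<close> by blast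
qed

lemma ruler_coeff_ltE:
  assumes lip: "\<And>a b. hdist (f a) (f b) \<le> M * dpar a b" and "0 < M" "0 < R"
    and "ruler_coeff f w R < \<delta>" and "horiz_line_W l"
  obtains L where "horiz_line_H L" "\<And>z. z \<in> l \<inter> wball w R \<Longrightarrow> \<exists>q\<in>L. hdist (f z) q < \<delta> * R"
proof -
  define admissible where "admissible = {\<rho>. \<rho> > 0 \<and> (\<forall>l. horiz_line_W l \<longrightarrow>
      (\<exists>L. horiz_line_H L \<and> f ` (l \<inter> wball w R) \<subseteq> hnbhd L (\<rho> * R)))}"
  obtain L0 where "horiz_line_H L0" "f ` wball w R \<subseteq> hnbhd L0 (M * R)"
    using lipschitz_image_near_horiz_line[OF lip] \<open>0 < M\<close> by (metis less_imp_le)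
  then have "M \<in> admissible"
    unfolding admissible_def using \<open>0 < M\<close> by blast
  moreover have "Inf admissible < \<delta>"
    using assms(4) unfolding ruler_coeff_def admissible_def .
  ultimately obtain \<rho> where "\<rho> \<in> admissible" "\<rho> < \<delta>"
    using cInf_lessD by blast
  then obtain L where L: "horiz_line_H L" "f ` (l \<inter> wball w R) \<subseteq> hnbhd L (\<rho> * R)"
    using assms(5) unfolding admissible_def by blast
  have "\<rho> * R < \<delta> * R"
    using \<open>\<rho> < \<delta>\<close> \<open>0 < R\<close> by simp
  moreover have "L \<noteq> {}"
    using L(1) unfolding horiz_line_H_range by blast
  ultimately have "\<exists>q\<in>L. hdist (f z) q < \<delta> * R" if "z \<in> l \<inter> wball w R" for z
    using L(2) that by (blast elim: hnbhdE)
  then show ?thesis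
    using that L(1) by blast
qed

lemma ruler_coeff_small_near_lines:
  fixes f :: "wpl \<Rightarrow> heis"
  assumes lip: "\<And>a b. hdist (f a) (f b) \<le> M * dpar a b" and M: "0 < M" and N: "0 < N" and r: "0 < r"
    and ruler: "ruler_coeff f (y0, \<tau>0) (N * r) < 1 / N^2" and t: "\<bar>t - \<tau>0\<bar> \<le> (N * r)^2"
  obtains L where "horiz_line_H L" "\<And>y. \<bar>y - y0\<bar> \<le> N * r \<Longrightarrow> \<exists>q\<in>L. hdist (f (y, t)) q \<le> r / N"
proof -
  obtain L where L: "horiz_line_H L"
    "\<And>z. z \<in> (UNIV \<times> {t}) \<inter> wball (y0, \<tau>0) (N * r) \<Longrightarrow> \<exists>q\<in>L. hdist (f z) q < 1 / N^2 * (N * r)"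
    using ruler_coeff_ltE[OF lip M _ ruler, of "UNIV \<times> {t}"] N r by (auto simp: horiz_line_W_def)
  have "\<exists>q\<in>L. hdist (f (y, t)) q \<le> r / N" if "\<bar>y - y0\<bar> \<le> N * r" for y
  proof -
    have "(y, t) \<in> (UNIV \<times> {t}) \<inter> wball (y0, \<tau>0) (N * r)"
      using that t N r by (simp add: mem_wball_iff)
    moreover have "1 / N^2 * (N * r) = r / N"
      by (simp add: power2_eq_square)
    ultimately show ?thesis
      using L(2) by (fastforce intro: less_imp_le)
  qed
  then show ?thesis
    using L(1) that by blast
qed

text \<open>\<open>beta_plane\<close> is \<open>Inf {}\<close>, an unspecified real, when no \<open>\<epsilon>\<close> is admissible.\<close>

lemma beta_plane_lower_bound: "min 0 (Inf {}) \<le> beta_plane f V w r"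
proof -
  define admissible where "admissible = {\<epsilon>. \<epsilon> > 0 \<and> (\<forall>l. horiz_line_W l \<longrightarrow>
      (\<exists>L. horiz_line_H L \<and> L \<subseteq> V \<and> f ` (l \<inter> wball w r) \<subseteq> hnbhd L (\<epsilon> * r)))}"
  have "min 0 (Inf {}) \<le> Inf admissible"
  proof (cases "admissible = {}")
    case False
    then show ?thesis
      by (intro min.coboundedI1 cInf_greatest) (auto simp: admissible_def)
  qed simp
  then show ?thesis
    unfolding beta_plane_def admissible_def .
qed

lemma beta_le_if_near_frame_lines:
  assumes u: "u1^2 + u2^2 = 1" and "0 < e"
    and near: "\<And>t. \<exists>c. \<forall>z \<in> (UNIV \<times> {t}) \<inter> wball w r.
      \<exists>s. hdist (f z) (hframe P u1 u2 (s, 0, c)) \<le> e * r"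
  shows "beta f w r \<le> e"
proof -
  obtain V where V: "vertical_plane V" "\<And>c. range (\<lambda>s. hframe P u1 u2 (s, 0, c)) \<subseteq> V"
    using hframe_axis_parallel_lines_in_vertical_plane[OF u, where P = P] by blast
  define admissible where "admissible = {\<epsilon>. \<epsilon> > 0 \<and> (\<forall>l. horiz_line_W l \<longrightarrow>
      (\<exists>L. horiz_line_H L \<and> L \<subseteq> V \<and> f ` (l \<inter> wball w r) \<subseteq> hnbhd L (\<epsilon> * r)))}"
  have "\<exists>L. horiz_line_H L \<and> L \<subseteq> V \<and> f ` (l \<inter> wball w r) \<subseteq> hnbhd L (e * r)"
    if "horiz_line_W l" for l
  proof -
    from \<open>horiz_line_W l\<close> obtain t where l: "l = UNIV \<times> {t}"
      unfolding horiz_line_W_def by blast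
    obtain c where "\<forall>z \<in> l \<inter> wball w r. \<exists>s. hdist (f z) (hframe P u1 u2 (s, 0, c)) \<le> e * r"
      using near[of t] l by blast
    then have "f ` (l \<inter> wball w r) \<subseteq> hnbhd (range (\<lambda>s. hframe P u1 u2 (s, 0, c))) (e * r)"
      by (blast intro: mem_hnbhdI)
    then show ?thesis
      using hframe_axis_parallel_line[OF u] V(2) by blast
  qed
  then have "e \<in> admissible"
    unfolding admissible_def using \<open>0 < e\<close> by blast
  then have "beta_plane f V w r \<le> e"
    unfolding beta_plane_def admissible_def[symmetric]
    by (rule cInf_lower) (auto intro: bdd_belowI[of _ 0] simp: admissible_def)
  moreover have "beta f w r \<le> beta_plane f V w r"
    unfolding beta_def using V(1)
    by (intro cInf_lower bdd_belowI[of _ "min 0 (Inf {})"]) (blast intro: beta_plane_lower_bound)+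
  ultimately show ?thesis
    by simp
qed

section \<open>Quadratics and the numerical constants\<close>

lemma quadratic_leading_coeff_small:
  fixes a b c E S X1 X2 X3 :: real
  assumes S: "0 < S" "S \<le> \<bar>X1 - X2\<bar>" "S \<le> \<bar>X2 - X3\<bar>" "S \<le> \<bar>X3 - X1\<bar>"
    and q: "\<bar>a + b * X1 + c * X1^2\<bar> \<le> E" "\<bar>a + b * X2 + c * X2^2\<bar> \<le> E"
      "\<bar>a + b * X3 + c * X3^2\<bar> \<le> E"
  shows "\<bar>c\<bar> * S^2 \<le> 3 * E"
proof -
  define q where "q x = a + b * x + c * x^2" for x
  define d1 d2 d3 where "d1 = \<bar>X2 - X3\<bar>" and "d2 = \<bar>X3 - X1\<bar>" and "d3 = \<bar>X1 - X2\<bar>"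
  have "q X1 * (X2 - X3) + q X2 * (X3 - X1) + q X3 * (X1 - X2) = - c * ((X1 - X2) * (X2 - X3) * (X3 - X1))"
    by (simp add: q_def power2_eq_square algebra_simps)
  then have "\<bar>c\<bar> * (d1 * d2 * d3) = \<bar>q X1 * (X2 - X3) + q X2 * (X3 - X1) + q X3 * (X1 - X2)\<bar>"
    by (simp add: d1_def d2_def d3_def abs_mult)
  also have "\<dots> \<le> E * d1 + E * d2 + E * d3"
    using q abs_triangle_ineq[of "q X1 * (X2 - X3) + q X2 * (X3 - X1)" "q X3 * (X1 - X2)"]
      abs_triangle_ineq[of "q X1 * (X2 - X3)" "q X2 * (X3 - X1)"]
      mult_right_mono[of "\<bar>q X1\<bar>" E d1] mult_right_mono[of "\<bar>q X2\<bar>" E d2] mult_right_mono[of "\<bar>q X3\<bar>" E d3]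
    by (simp add: q_def d1_def d2_def d3_def abs_mult)
  finally have prod: "\<bar>c\<bar> * (d1 * d2 * d3) \<le> E * (d1 + d2 + d3)"
    by (simp add: algebra_simps)
  have d: "S \<le> d1" "S \<le> d2" "S \<le> d3"
    using S by (simp_all add: d1_def d2_def d3_def)
  have "S * S \<le> d2 * d3" "S * S \<le> d1 * d3" "S * S \<le> d1 * d2"
    using d S(1) by (simp_all add: mult_mono)
  then have "S^2 * d1 \<le> d1 * d2 * d3" "S^2 * d2 \<le> d1 * d2 * d3" "S^2 * d3 \<le> d1 * d2 * d3"
    using d S(1) by (simp_all add: power2_eq_square mult_right_mono algebra_simps)
  then have "S^2 * (d1 + d2 + d3) \<le> 3 * (d1 * d2 * d3)"
    by (simp add: algebra_simps)
  then have "(\<bar>c\<bar> * S^2) * (d1 + d2 + d3) \<le> (3 * E) * (d1 + d2 + d3)"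
    using prod mult_left_mono[of "S^2 * (d1 + d2 + d3)" "3 * (d1 * d2 * d3)" "\<bar>c\<bar>"]
    by (simp add: algebra_simps)
  moreover have "0 < d1 + d2 + d3"
    using d S(1) by simp
  ultimately show ?thesis
    by simp
qed

lemma quadratic_linear_coeff_small:
  fixes a b c E S U X1 X2 :: real
  assumes S: "0 < S" "S \<le> \<bar>X1 - X2\<bar>"
    and q: "\<bar>a + b * X1 + c * X1^2\<bar> \<le> E" "\<bar>a + b * X2 + c * X2^2\<bar> \<le> E"
    and U: "\<bar>X1\<bar> \<le> U" "\<bar>X2\<bar> \<le> U"
  shows "\<bar>b\<bar> \<le> 2 * E / S + 2 * \<bar>c\<bar> * U"
proof -
  have "(a + b * X1 + c * X1^2) - (a + b * X2 + c * X2^2) = (X1 - X2) * (b + c * (X1 + X2))"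
    by (simp add: power2_eq_square algebra_simps)
  then have "\<bar>X1 - X2\<bar> * \<bar>b + c * (X1 + X2)\<bar> \<le> 2 * E"
    using q by (simp add: abs_mult[symmetric])
  then have "S * \<bar>b + c * (X1 + X2)\<bar> \<le> 2 * E"
    using S(2) by (meson abs_ge_zero mult_right_mono order_trans)
  then have "\<bar>b + c * (X1 + X2)\<bar> \<le> 2 * E / S"
    using S(1) by (simp add: field_simps)
  moreover have "\<bar>X1 + X2\<bar> \<le> 2 * U"
    using U by linarith
  then have "\<bar>c * (X1 + X2)\<bar> \<le> 2 * \<bar>c\<bar> * U"
    using mult_left_mono[of "\<bar>X1 + X2\<bar>" "2 * U" "\<bar>c\<bar>"] by (simp add: abs_mult)
  ultimately show ?thesis
    by linarith
qed

text \<open>The hypotheses are the two quadratic estimates for a line near the \<open>x\<close>-axis, with separation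
  \<open>S = N r / (2 M)\<close>, error \<open>E = 2 (3 M r)^2\<close> and range \<open>U = 2 M N r\<close>.\<close>

lemma graph_coeffs_arith:
  fixes m k M N r :: real
  assumes M: "1 \<le> M" and N: "1 \<le> N" and r: "0 < r"
    and m: "\<bar>m\<bar> / 2 * (N * r / (2 * M))^2 \<le> 3 * (2 * (3 * M * r)^2)"
    and k: "\<bar>k\<bar> \<le> 2 * (2 * (3 * M * r)^2) / (N * r / (2 * M)) + 2 * (\<bar>m\<bar> / 2) * (2 * M * N * r)"
  shows "\<bar>m\<bar> * M^2 \<le> 432 * (M^6 / N)" "\<bar>k\<bar> * M \<le> 936 * (M^6 / N) * r"
proof -
  have "\<bar>m\<bar> * N^2 * r^2 \<le> (432 * M^4) * r^2"
    using m M by (simp add: field_simps power2_eq_square eval_nat_numeral)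
  then have "\<bar>m\<bar> * N^2 \<le> 432 * M^4"
    using r by simp
  then have m': "\<bar>m\<bar> \<le> 432 * M^4 / N^2"
    using N by (simp add: field_simps)
  have "\<bar>m\<bar> * M^2 \<le> 432 * M^6 / N^2"
    using mult_right_mono[OF m', of "M^2"] by (simp add: eval_nat_numeral)
  also have "\<dots> \<le> 432 * M^6 / N"
    using N by (simp add: frac_le power2_eq_square)
  finally show "\<bar>m\<bar> * M^2 \<le> 432 * (M^6 / N)"
    by simp
  have "2 * (2 * (3 * M * r)^2) / (N * r / (2 * M)) = 72 * M^3 * r / N"
    using M N r by (simp add: field_simps power2_eq_square eval_nat_numeral)
  also have "\<dots> \<le> 72 * M^5 * r / N"
    using M N r by (simp add: divide_right_mono power_increasing)
  finally have "\<bar>k\<bar> \<le> 72 * M^5 * r / N + \<bar>m\<bar> * (2 * M * N * r)"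
    using k by simp
  also have "\<bar>m\<bar> * (2 * M * N * r) \<le> 432 * M^4 / N^2 * (2 * M * N * r)"
    using m' M N r by (intro mult_right_mono) simp_all
  also have "\<dots> = 864 * M^5 * r / N"
    using N by (simp add: field_simps power2_eq_square eval_nat_numeral)
  finally have k': "\<bar>k\<bar> \<le> 936 * M^5 * r / N"
    by (simp add: add_divide_distrib[symmetric] mult_ac)
  have "\<bar>k\<bar> * M \<le> (936 * M^5 * r / N) * M"
    using mult_right_mono[OF k', of M] M by simp
  also have "\<dots> = 936 * (M^6 / N) * r"
    by (simp add: eval_nat_numeral mult_ac)
  finally show "\<bar>k\<bar> * M \<le> 936 * (M^6 / N) * r" .
qed

lemma flat_y_bound:
  fixes M \<theta> \<epsilon> r m k X :: real
  assumes M: "1 \<le> M" and \<theta>: "0 \<le> \<theta>" "100000 * \<theta> \<le> \<epsilon>^2" and \<epsilon>: "0 < \<epsilon>" "\<epsilon> \<le> 1"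
    and r: "0 < r" and m: "\<bar>m\<bar> * M^2 \<le> 432 * \<theta>" and k: "\<bar>k\<bar> * M \<le> 936 * \<theta> * r"
    and X: "\<bar>X\<bar> \<le> 3 * M * r"
  shows "\<bar>m * X + k\<bar> \<le> \<epsilon> / 4 * r"
proof -
  have "\<bar>m\<bar> * M \<le> \<bar>m\<bar> * M^2"
    using M by (simp add: power2_eq_square mult_left_mono)
  then have mM: "\<bar>m\<bar> * M \<le> 432 * \<theta>"
    using m by linarith
  have "\<bar>m * X\<bar> \<le> (\<bar>m\<bar> * M) * (3 * r)"
    using mult_left_mono[OF X abs_ge_zero[of m]] by (simp add: abs_mult)
  also have "\<dots> \<le> (432 * \<theta>) * (3 * r)"
    using mM r by (intro mult_right_mono) simp_all
  finally have "\<bar>m * X\<bar> \<le> 1296 * \<theta> * r"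
    by simp
  moreover have "\<bar>k\<bar> \<le> \<bar>k\<bar> * M"
    using M by (simp add: mult_le_cancel_left1)
  ultimately have "\<bar>m * X + k\<bar> \<le> 2232 * \<theta> * r"
    using k abs_triangle_ineq[of "m * X" k] by simp
  also have "\<dots> \<le> \<epsilon> / 4 * r"
  proof -
    have "\<epsilon>^2 \<le> \<epsilon>"
      using \<epsilon> by (simp add: power2_eq_square mult_left_le)
    then show ?thesis
      using \<theta> r by (simp add: field_simps)
  qed
  finally show ?thesis .
qed

lemma flat_t_bound:
  fixes M \<theta> \<epsilon> r m k X :: real
  assumes M: "1 \<le> M" and \<theta>: "0 \<le> \<theta>" "100000 * \<theta> \<le> \<epsilon>^2"
    and r: "0 < r" and m: "\<bar>m\<bar> * M^2 \<le> 432 * \<theta>" and k: "\<bar>k\<bar> * M \<le> 936 * \<theta> * r"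
    and X: "\<bar>X\<bar> \<le> 3 * M * r"
  shows "\<bar>k * X + m * X^2 / 2\<bar> \<le> (\<epsilon> / 4 * r)^2"
proof -
  have "\<bar>k * X\<bar> \<le> (\<bar>k\<bar> * M) * (3 * r)"
    using mult_left_mono[OF X abs_ge_zero[of k]] by (simp add: abs_mult)
  also have "\<dots> \<le> (936 * \<theta> * r) * (3 * r)"
    using k r by (intro mult_right_mono) simp_all
  finally have kX: "\<bar>k * X\<bar> \<le> 2808 * \<theta> * r^2"
    by (simp add: power2_eq_square)
  have "X^2 \<le> (3 * M * r)^2"
    using power_mono[OF X abs_ge_zero[of X], of 2] by simp
  then have "\<bar>m * X^2 / 2\<bar> \<le> 9 / 2 * r^2 * (\<bar>m\<bar> * M^2)"
    using mult_left_mono[of "X^2" "(3 * M * r)^2" "\<bar>m\<bar>"] by (simp add: abs_mult power_mult_distrib mult_ac)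
  also have "\<dots> \<le> 9 / 2 * r^2 * (432 * \<theta>)"
    using m by (intro mult_left_mono) simp_all
  finally have "\<bar>k * X + m * X^2 / 2\<bar> \<le> 4752 * \<theta> * r^2"
    using kX abs_triangle_ineq[of "k * X" "m * X^2 / 2"] by simp
  also have "\<dots> \<le> (\<epsilon> / 4 * r)^2"
    using \<theta> r by (simp add: field_simps power_mult_distrib)
  finally show ?thesis .
qed

lemma large_scale_bounds:
  fixes M N \<epsilon> :: real
  assumes M: "1 \<le> M" and \<epsilon>: "0 < \<epsilon>" "\<epsilon> \<le> 1" and N: "100000 * M^6 \<le> \<epsilon>^2 * N"
  shows "16 * M^2 \<le> N" "16 \<le> N" "1 / N \<le> \<epsilon> / 4" "100000 * (M^6 / N) \<le> \<epsilon>^2"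
proof -
  have \<epsilon>2: "\<epsilon>^2 \<le> \<epsilon>" "\<epsilon> \<le> 1"
    using \<epsilon> by (simp_all add: power2_eq_square mult_left_le)
  have M6: "1 \<le> M^6" "M^2 \<le> M^6"
    using M by (simp_all add: one_le_power power_increasing)
  then have "0 < \<epsilon>^2 * N"
    using N by linarith
  then have "0 < N"
    using \<epsilon>(1) by (simp add: zero_less_mult_iff)
  then have \<epsilon>N: "\<epsilon>^2 * N \<le> N"
    using \<epsilon>2 mult_right_mono[of "\<epsilon>^2" 1 N] by simp
  then show "16 * M^2 \<le> N" "16 \<le> N"
    using N M6 by linarith+
  have "\<epsilon>^2 * N \<le> \<epsilon> * N"
    using \<epsilon>2 \<open>0 < N\<close> by (simp add: mult_right_mono)
  then have "4 \<le> \<epsilon> * N"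
    using N M6 by linarith
  then show "1 / N \<le> \<epsilon> / 4"
    using \<open>0 < N\<close> by (simp add: field_simps)
  show "100000 * (M^6 / N) \<le> \<epsilon>^2"
    using N \<open>0 < N\<close> by (simp add: field_simps)
qed

section \<open>Flatness in a normalized frame\<close>

context
  fixes g :: "wpl \<Rightarrow> heis" and M N r y0 \<tau>0 t :: real and B :: "heis set"
  assumes M: "1 \<le> M" and N: "16 * M^2 \<le> N" and r: "0 < r"
    and lip: "\<And>a b. hdist (g a) (g b) \<le> M * dpar a b"
    and colip: "\<And>a b. dpar a b \<le> M * hdist (g a) (g b)"
    and g_center: "hnorm (g (y0, \<tau>0)) \<le> r / N"
    and g_axis: "\<And>y. \<bar>y - y0\<bar> \<le> N * r \<Longrightarrow> \<exists>s. hdist (g (y, \<tau>0)) (s, 0, 0) \<le> r / N"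
    and t: "\<bar>t - \<tau>0\<bar> \<le> r^2"
    and B: "horiz_line_H B"
    and g_B: "\<And>y. \<bar>y - y0\<bar> \<le> N * r \<Longrightarrow> \<exists>b\<in>B. hdist (g (y, t)) b \<le> r / N"
begin

private lemma N_bounds: "16 \<le> N" "0 < N" "r / N \<le> r" "r \<le> N * r" "2 * r / N \<le> r"
proof -
  have "1 \<le> M^2"
    using M by simp
  then show "16 \<le> N" "0 < N"
    using N by linarith+
  then show "r / N \<le> r" "r \<le> N * r" "2 * r / N \<le> r"
    using r by (simp_all add: divide_le_eq)
qed

private lemma M_pos: "0 < M"
  using M by simp

private lemma r_le_Mr: "r \<le> M * r"
  using M r by simp

private lemma sqrt_t_le: "sqrt \<bar>t - \<tau>0\<bar> \<le> r"
  using t r by (simp add: sqrt_le_iff)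

lemma near_B_point_bounds:
  assumes y: "\<bar>y - y0\<bar> \<le> N * r" and p: "hdist (g (y, t)) (X, Y, T) \<le> r / N"
  shows "\<bar>Y\<bar> \<le> 3 * M * r" "\<bar>T - X * Y / 2\<bar> \<le> 2 * (3 * M * r)^2"
    and "\<bar>X\<bar> \<le> 2 * r / N + M * max \<bar>y - y0\<bar> r"
proof -
  obtain s where s: "hdist (g (y, \<tau>0)) (s, 0, 0) \<le> r / N"
    using g_axis[OF y] by blast
  have "hdist (g (y, t)) (g (y, \<tau>0)) \<le> M * r"
    using lip[of "(y, t)" "(y, \<tau>0)"] mult_left_mono[OF sqrt_t_le less_imp_le[OF M_pos]]
    by (simp add: dpar_eq)
  then have "hdist (X, Y, T) (s, 0, 0) \<le> 3 * M * r"
    using p s N_bounds(3) M r hdist_triangle[of "(X, Y, T)" "(s, 0, 0)" "g (y, t)"]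
      hdist_triangle[of "g (y, t)" "(s, 0, 0)" "g (y, \<tau>0)"] hdist_commute[of "(X, Y, T)" "g (y, t)"]
      mult_right_mono[OF M less_imp_le[OF r]]
    by linarith
  then show "\<bar>Y\<bar> \<le> 3 * M * r" "\<bar>T - X * Y / 2\<bar> \<le> 2 * (3 * M * r)^2"
    by (rule near_x_axis_bounds)+
  have "dpar (y, t) (y0, \<tau>0) \<le> max \<bar>y - y0\<bar> r"
    using sqrt_t_le by (auto simp: dpar_eq)
  then have "hdist (g (y, t)) (g (y0, \<tau>0)) \<le> M * max \<bar>y - y0\<bar> r"
    using lip[of "(y, t)" "(y0, \<tau>0)"] mult_left_mono[OF _ less_imp_le[OF M_pos]] by (meson order_trans)
  then show "\<bar>X\<bar> \<le> 2 * r / N + M * max \<bar>y - y0\<bar> r"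
    using p g_center abs_fst_le_hnorm[of X Y T] hnorm_eq_hdist_zero[of "(X, Y, T)"]
      hnorm_eq_hdist_zero[of "g (y0, \<tau>0)"] hdist_commute[of "(X, Y, T)" "g (y, t)"]
      hdist_triangle[of "(X, Y, T)" "(0, 0, 0)" "g (y, t)"]
      hdist_triangle[of "g (y, t)" "(0, 0, 0)" "g (y0, \<tau>0)"]
    by linarith
qed

lemma near_B_point_abs_x_le:
  assumes "\<bar>y - y0\<bar> \<le> N * r" "hdist (g (y, t)) (X, Y, T) \<le> r / N"
  shows "\<bar>X\<bar> \<le> 2 * M * N * r"
proof -
  have "M * max \<bar>y - y0\<bar> r \<le> M * (N * r)"
    using assms(1) N_bounds(4) M_pos by simp
  moreover have "2 * r / N \<le> M * (N * r)"
    using N_bounds(5) r_le_Mr mult_left_mono[OF N_bounds(4) less_imp_le[OF M_pos]] by linarith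
  ultimately show ?thesis
    using near_B_point_bounds(3)[OF assms] by simp
qed

lemma near_B_points_separated:
  assumes ya: "\<bar>ya - y0\<bar> \<le> N * r" and yb: "\<bar>yb - y0\<bar> \<le> N * r" and apart: "N * r \<le> \<bar>ya - yb\<bar>"
    and pa: "(Xa, Ya, Ta) \<in> B" "hdist (g (ya, t)) (Xa, Ya, Ta) \<le> r / N"
    and pb: "(Xb, Yb, Tb) \<in> B" "hdist (g (yb, t)) (Xb, Yb, Tb) \<le> r / N"
  shows "N * r / (2 * M) \<le> \<bar>Xa - Xb\<bar>"
proof -
  have "N * r \<le> M * hdist (g (ya, t)) (g (yb, t))"
    using colip[of "(ya, t)" "(yb, t)"] apart by (simp add: dpar_eq)
  then have "N * r / M \<le> hdist (g (ya, t)) (g (yb, t))"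
    using M_pos by (simp add: field_simps)
  moreover have "hdist (g (ya, t)) (g (yb, t)) \<le> 2 * r / N + \<bar>Xa - Xb\<bar> + \<bar>Ya - Yb\<bar>"
    using pa(2) pb(2) hdist_horiz_line_le[OF B pa(1) pb(1)] hdist_commute[of "g (yb, t)" "(Xb, Yb, Tb)"]
      hdist_triangle[of "g (ya, t)" "g (yb, t)" "(Xa, Ya, Ta)"]
      hdist_triangle[of "(Xa, Ya, Ta)" "g (yb, t)" "(Xb, Yb, Tb)"]
    by linarith
  moreover have "\<bar>Ya - Yb\<bar> \<le> 6 * M * r"
    using near_B_point_bounds(1)[OF ya pa(2)] near_B_point_bounds(1)[OF yb pb(2)] by linarith
  moreover have "8 * M * r \<le> N * r / (2 * M)"
    using N M_pos r by (simp add: field_simps power2_eq_square)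
  moreover have "2 * r / N \<le> 2 * M * r"
    using N_bounds(3) r_le_Mr by simp
  moreover have "N * r / M = 2 * (N * r / (2 * M))"
    by simp
  ultimately show ?thesis
    by linarith
qed

lemma near_B_point_on_quadratic:
  assumes "(X, Y, T) \<in> B" "\<bar>y - y0\<bar> \<le> N * r" "hdist (g (y, t)) (X, Y, T) \<le> r / N"
    and graph: "\<And>X Y T. (X, Y, T) \<in> B \<Longrightarrow> Y = m * X + k \<and> T = \<alpha> - k * X / 2"
  shows "\<bar>\<alpha> + (- k) * X + (- m / 2) * X^2\<bar> \<le> 2 * (3 * M * r)^2"
proof -
  have "T - X * Y / 2 = \<alpha> + (- k) * X + (- m / 2) * X^2"
    using graph[OF assms(1)] by (simp add: power2_eq_square field_simps)
  then show ?thesis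
    using near_B_point_bounds(2)[OF assms(2,3)] by simp
qed

lemma B_graph_with_small_coeffs:
  obtains m k \<alpha> where "\<And>X Y T. (X, Y, T) \<in> B \<Longrightarrow> Y = m * X + k \<and> T = \<alpha> - k * X / 2"
    "\<bar>m\<bar> * M^2 \<le> 432 * (M^6 / N)" "\<bar>k\<bar> * M \<le> 936 * (M^6 / N) * r"
proof -
  define y1 y3 where "y1 = y0 - N * r" and "y3 = y0 + N * r"
  have y: "\<bar>y1 - y0\<bar> \<le> N * r" "\<bar>y0 - y0\<bar> \<le> N * r" "\<bar>y3 - y0\<bar> \<le> N * r"
    using N_bounds r by (simp_all add: y1_def y3_def)
  have apart: "N * r \<le> \<bar>y1 - y0\<bar>" "N * r \<le> \<bar>y0 - y3\<bar>" "N * r \<le> \<bar>y3 - y1\<bar>"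
    using N_bounds r by (simp_all add: y1_def y3_def)
  obtain X1 Y1 T1 X2 Y2 T2 X3 Y3 T3 where
    p1: "(X1, Y1, T1) \<in> B" "hdist (g (y1, t)) (X1, Y1, T1) \<le> r / N" and
    p2: "(X2, Y2, T2) \<in> B" "hdist (g (y0, t)) (X2, Y2, T2) \<le> r / N" and
    p3: "(X3, Y3, T3) \<in> B" "hdist (g (y3, t)) (X3, Y3, T3) \<le> r / N"
    using g_B[OF y(1)] g_B[OF y(2)] g_B[OF y(3)] by (metis prod_cases3)
  define S where "S = N * r / (2 * M)"
  have sep: "S \<le> \<bar>X1 - X2\<bar>" "S \<le> \<bar>X2 - X3\<bar>" "S \<le> \<bar>X3 - X1\<bar>"
    unfolding S_def
    using near_B_points_separated[OF y(1) y(2) apart(1) p1 p2] near_B_points_separated[OF y(2) y(3) apart(2) p2 p3]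
      near_B_points_separated[OF y(3) y(1) apart(3) p3 p1] .
  have "0 < S"
    using N_bounds r M_pos by (simp add: S_def)
  then have "X3 \<noteq> X1"
    using sep(3) by auto
  then obtain m k \<alpha> where graph: "\<And>X Y T. (X, Y, T) \<in> B \<Longrightarrow> Y = m * X + k \<and> T = \<alpha> - k * X / 2"
    using horiz_line_H_graph[OF B p3(1) p1(1)] by blast
  have U: "\<bar>X1\<bar> \<le> 2 * M * N * r" "\<bar>X2\<bar> \<le> 2 * M * N * r"
    using near_B_point_abs_x_le[OF y(1) p1(2)] near_B_point_abs_x_le[OF y(2) p2(2)] .
  note q = near_B_point_on_quadratic[OF p1(1) y(1) p1(2) graph]
    near_B_point_on_quadratic[OF p2(1) y(2) p2(2) graph] near_B_point_on_quadratic[OF p3(1) y(3) p3(2) graph]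
  note quadratic_leading_coeff_small[OF \<open>0 < S\<close> sep q]
    quadratic_linear_coeff_small[OF \<open>0 < S\<close> sep(1) q(1,2) U]
  then have "\<bar>m\<bar> * M^2 \<le> 432 * (M^6 / N)" "\<bar>k\<bar> * M \<le> 936 * (M^6 / N) * r"
    using graph_coeffs_arith[OF M _ r] N_bounds(1) by (simp_all add: S_def)
  then show ?thesis
    using that graph by blast
qed

lemma near_axis_parallel_line:
  assumes \<epsilon>: "0 < \<epsilon>" "\<epsilon> \<le> 1" "100000 * M^6 \<le> \<epsilon>^2 * N"
  obtains c where "\<And>y. \<bar>y - y0\<bar> \<le> r \<Longrightarrow> \<exists>s. hdist (g (y, t)) (s, 0, c) \<le> \<epsilon> / 2 * r"
proof -
  obtain m k \<alpha> where graph: "\<And>X Y T. (X, Y, T) \<in> B \<Longrightarrow> Y = m * X + k \<and> T = \<alpha> - k * X / 2"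
    and m: "\<bar>m\<bar> * M^2 \<le> 432 * (M^6 / N)" and k: "\<bar>k\<bar> * M \<le> 936 * (M^6 / N) * r"
    using B_graph_with_small_coeffs by blast
  have \<theta>: "0 \<le> M^6 / N" "100000 * (M^6 / N) \<le> \<epsilon>^2"
    using large_scale_bounds(4)[OF M \<epsilon>] N_bounds(2) by simp_all
  have "\<exists>s. hdist (g (y, t)) (s, 0, \<alpha>) \<le> \<epsilon> / 2 * r" if y: "\<bar>y - y0\<bar> \<le> r" for y
  proof -
    have yN: "\<bar>y - y0\<bar> \<le> N * r"
      using y N_bounds(4) by linarith
    obtain X Y T where p: "(X, Y, T) \<in> B" "hdist (g (y, t)) (X, Y, T) \<le> r / N"
      using g_B[OF yN] by (metis prod_cases3)
    have "\<bar>X\<bar> \<le> 3 * M * r"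
      using near_B_point_bounds(3)[OF yN p(2)] y N_bounds(5) r_le_Mr by (simp add: max_def)
    note flat = flat_y_bound[OF M \<theta> \<epsilon>(1,2) r m k this] flat_t_bound[OF M \<theta> r m k this]
    have "Y = m * X + k" "T - \<alpha> - X * Y / 2 = - (k * X + m * X^2 / 2)"
      using graph[OF p(1)] by (simp_all add: power2_eq_square field_simps)
    then have "\<bar>Y\<bar> \<le> \<epsilon> / 4 * r" "\<bar>T - \<alpha> - X * Y / 2\<bar> \<le> (\<epsilon> / 4 * r)^2"
      using flat by simp_all
    moreover have "0 \<le> \<epsilon> / 4 * r"
      using \<epsilon>(1) r by simp
    ultimately have "hnorm (0, Y, T - \<alpha> - X * Y / 2) \<le> \<epsilon> / 4 * r"
      unfolding hnorm_le_iff by (simp add: power2_le_iff_abs_le)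
    then have "hdist (X, Y, T) (X, 0, \<alpha>) \<le> \<epsilon> / 4 * r"
      by (simp add: hdist_eq)
    moreover have "r / N \<le> \<epsilon> / 4 * r"
      using large_scale_bounds(3)[OF M \<epsilon>] r mult_right_mono[of "1 / N" "\<epsilon> / 4" r] by simp
    ultimately have "hdist (g (y, t)) (X, 0, \<alpha>) \<le> \<epsilon> / 2 * r"
      using p(2) hdist_triangle[of "g (y, t)" "(X, 0, \<alpha>)" "(X, Y, T)"] by linarith
    then show ?thesis
      by blast
  qed
  then show ?thesis
    using that by blast
qed

end

lemma image_near_frame_line:
  fixes f :: "wpl \<Rightarrow> heis"
  assumes M: "1 \<le> M" and \<epsilon>: "0 < \<epsilon>" "\<epsilon> \<le> 1" "100000 * M^6 \<le> \<epsilon>^2 * N" and r: "0 < r"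
    and lip: "\<And>a b. hdist (f a) (f b) \<le> M * dpar a b"
    and colip: "\<And>a b. dpar a b \<le> M * hdist (f a) (f b)"
    and u: "u1^2 + u2^2 = 1"
    and center: "hdist (f (y0, \<tau>0)) P \<le> r / N"
    and axis: "\<And>y. \<bar>y - y0\<bar> \<le> N * r \<Longrightarrow> \<exists>s. hdist (f (y, \<tau>0)) (hframe P u1 u2 (s, 0, 0)) \<le> r / N"
    and t: "\<bar>t - \<tau>0\<bar> \<le> r^2"
    and L: "horiz_line_H L" "\<And>y. \<bar>y - y0\<bar> \<le> N * r \<Longrightarrow> \<exists>q\<in>L. hdist (f (y, t)) q \<le> r / N"
  shows "\<exists>c. \<forall>z \<in> (UNIV \<times> {t}) \<inter> wball (y0, \<tau>0) r. \<exists>s. hdist (f z) (hframe P u1 u2 (s, 0, c)) \<le> \<epsilon> / 2 * r"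
proof -
  define g where "g = hframe_inv P u1 u2 \<circ> f"
  have g_frame: "hdist (g z) x = hdist (f z) (hframe P u1 u2 x)" for z x
    by (simp add: g_def hdist_hframe_inv_left[OF u])
  have "hdist (g a) (g b) = hdist (f a) (f b)" for a b
    by (simp add: g_def hdist_hframe_inv[OF u])
  then have g_lip: "\<And>a b. hdist (g a) (g b) \<le> M * dpar a b"
    and g_colip: "\<And>a b. dpar a b \<le> M * hdist (g a) (g b)"
    using lip colip by simp_all
  have g_center: "hnorm (g (y0, \<tau>0)) \<le> r / N"
    using center g_frame[of "(y0, \<tau>0)" "(0, 0, 0)"] by (simp add: hnorm_eq_hdist_zero)
  have g_axis: "\<exists>s. hdist (g (y, \<tau>0)) (s, 0, 0) \<le> r / N" if "\<bar>y - y0\<bar> \<le> N * r" for y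
    using axis[OF that] by (simp add: g_frame)
  have g_B: "\<exists>b\<in>hframe_inv P u1 u2 ` L. hdist (g (y, t)) b \<le> r / N" if "\<bar>y - y0\<bar> \<le> N * r" for y
    using L(2)[OF that] by (auto simp: g_def hdist_hframe_inv[OF u])
  obtain c where c: "\<And>y. \<bar>y - y0\<bar> \<le> r \<Longrightarrow> \<exists>s. hdist (g (y, t)) (s, 0, c) \<le> \<epsilon> / 2 * r"
    using near_axis_parallel_line[OF M large_scale_bounds(1)[OF M \<epsilon>] r g_lip g_colip g_center g_axis t
        horiz_line_H_hframe_inv[OF u L(1)] g_B \<epsilon>] by blast
  show ?thesis
  proof (rule exI[of _ c], intro ballI)
    fix z assume "z \<in> (UNIV \<times> {t}) \<inter> wball (y0, \<tau>0) r"
    then obtain y where "z = (y, t)" "\<bar>y - y0\<bar> \<le> r"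
      using r by (auto simp: mem_wball_iff)
    then show "\<exists>s. hdist (f z) (hframe P u1 u2 (s, 0, c)) \<le> \<epsilon> / 2 * r"
      using c g_frame by auto
  qed
qed

lemma ruler_coeff_small_frame:
  fixes f :: "wpl \<Rightarrow> heis"
  assumes lip: "\<And>a b. hdist (f a) (f b) \<le> M * dpar a b" and M: "0 < M" and N: "0 < N" and r: "0 < r"
    and ruler: "ruler_coeff f (y0, \<tau>0) (N * r) < 1 / N^2"
  obtains u1 u2 P where "u1^2 + u2^2 = 1" "hdist (f (y0, \<tau>0)) P \<le> r / N"
    "\<And>y. \<bar>y - y0\<bar> \<le> N * r \<Longrightarrow> \<exists>s. hdist (f (y, \<tau>0)) (hframe P u1 u2 (s, 0, 0)) \<le> r / N"
proof -
  obtain A where A: "horiz_line_H A" "\<And>y. \<bar>y - y0\<bar> \<le> N * r \<Longrightarrow> \<exists>q\<in>A. hdist (f (y, \<tau>0)) q \<le> r / N"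
    using ruler_coeff_small_near_lines[OF lip M N r ruler, of \<tau>0] by auto
  moreover have "\<bar>y0 - y0\<bar> \<le> N * r"
    using N r by simp
  ultimately obtain P where P: "P \<in> A" "hdist (f (y0, \<tau>0)) P \<le> r / N"
    by blast
  obtain u1 u2 where "u1^2 + u2^2 = 1" "A = range (\<lambda>s. hframe P u1 u2 (s, 0, 0))"
    using horiz_line_H_normal_form[OF A(1) P(1)] .
  then show ?thesis
    using that P(2) A(2) by auto
qed

lemma beta_le_if_ruler_coeff_small:
  fixes f :: "wpl \<Rightarrow> heis"
  assumes M: "1 \<le> M" and \<epsilon>: "0 < \<epsilon>" "\<epsilon> \<le> 1" "100000 * M^6 \<le> \<epsilon>^2 * N"
    and f: "bilipschitz M f" and r: "0 < r" and ruler: "ruler_coeff f w (N * r) < 1 / N^2"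
  shows "beta f w r \<le> \<epsilon> / 2"
proof -
  obtain y0 \<tau>0 where w: "w = (y0, \<tau>0)"
    by fastforce
  have N: "1 \<le> N"
    using large_scale_bounds(2)[OF M \<epsilon>] by linarith
  have pos: "0 < M" "0 < N"
    using M N by simp_all
  have lip: "\<And>a b. hdist (f a) (f b) \<le> M * dpar a b"
    and colip: "\<And>a b. dpar a b \<le> M * hdist (f a) (f b)"
    using f M by (auto simp: bilipschitz_def field_simps)
  obtain u1 u2 P where u: "u1^2 + u2^2 = 1" and center: "hdist (f (y0, \<tau>0)) P \<le> r / N"
    and axis: "\<And>y. \<bar>y - y0\<bar> \<le> N * r \<Longrightarrow> \<exists>s. hdist (f (y, \<tau>0)) (hframe P u1 u2 (s, 0, 0)) \<le> r / N"
    using ruler_coeff_small_frame[OF lip pos r ruler[unfolded w]] by metis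
  have "\<exists>c. \<forall>z \<in> (UNIV \<times> {t}) \<inter> wball w r. \<exists>s. hdist (f z) (hframe P u1 u2 (s, 0, c)) \<le> \<epsilon> / 2 * r"
    for t
  proof (cases "\<bar>t - \<tau>0\<bar> \<le> r^2")
    case True
    moreover have "r^2 \<le> (N * r)^2"
      using N r by (simp add: power_mono)
    ultimately have "\<bar>t - \<tau>0\<bar> \<le> (N * r)^2"
      by linarith
    then obtain L where L: "horiz_line_H L" "\<And>y. \<bar>y - y0\<bar> \<le> N * r \<Longrightarrow> \<exists>q\<in>L. hdist (f (y, t)) q \<le> r / N"
      using ruler_coeff_small_near_lines[OF lip pos r ruler[unfolded w]] by blast
    show ?thesis
      unfolding w using image_near_frame_line[OF M \<epsilon> r lip colip u center axis True L] .
  next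
    case False
    then have "(UNIV \<times> {t}) \<inter> wball w r = {}"
      using r by (auto simp: w mem_wball_iff)
    then show ?thesis
      by simp
  qed
  then show ?thesis
    using \<epsilon>(1) by (intro beta_le_if_near_frame_lines[OF u]) simp_all
qed

theorem proposition4p6:
  fixes M :: real
  assumes "M \<ge> 1"
  shows "\<forall>\<epsilon>. 0 < \<epsilon> \<and> \<epsilon> \<le> 1 \<longrightarrow>
    (\<exists>C \<ge> 10. \<exists>\<delta> > 0. \<forall>f. bilipschitz M f \<longrightarrow>
      (\<forall>w r. r > 0 \<longrightarrow> ruler_coeff f w (C * r) < \<delta> \<longrightarrow> beta f w r < \<epsilon>))"
proof (intro allI impI)
  fix \<epsilon> :: real
  assume \<epsilon>: "0 < \<epsilon> \<and> \<epsilon> \<le> 1"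
  define N where "N = 100000 * M^6 / \<epsilon>^2"
  have N: "100000 * M^6 \<le> \<epsilon>^2 * N"
    using \<epsilon> by (simp add: N_def)
  have "10 \<le> N"
    using large_scale_bounds(2)[OF assms _ _ N] \<epsilon> by linarith
  moreover have "0 < 1 / N^2"
    using \<open>10 \<le> N\<close> by simp
  moreover have "beta f w r < \<epsilon>"
    if "bilipschitz M f" "0 < r" "ruler_coeff f w (N * r) < 1 / N^2" for f w r
    using beta_le_if_ruler_coeff_small[OF assms _ _ N that] \<epsilon> by simp
  ultimately show "\<exists>C \<ge> 10. \<exists>\<delta> > 0. \<forall>f. bilipschitz M f \<longrightarrow>
      (\<forall>w r. r > 0 \<longrightarrow> ruler_coeff f w (C * r) < \<delta> \<longrightarrow> beta f w r < \<epsilon>)"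
    by blast
qed

end
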